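(* Let $J-CI=L^{(1)}\cdots L^{(p)}U$ be a Darboux factorization, and for $j=0,\ldots,p-1$ let $g^{(j)}_{k,s}$ be the entries (rows and columns indexed by $1,2,\ldots$) of $G^{(j)}=L^{(j+2)}\cdots L^{(p)}UL^{(1)}\cdots L^{(j)}$ (empty products being the identity). For each $j=0,1,\ldots,p$ let $\{\mathcal{L}^{(j)}_n\}$ be the dual sequence of $\{P^{(j)}_n\}$, with $\mathcal{L}^{(0)}_n=\mathcal{L}_n$ and $\mathcal{L}^{(j)}_{-1}:=0$. Then for each $j=0,\ldots,p-1$ and $n=0,1,\ldots$: $$\mathcal{L}^{(j+1)}_n=\mathcal{L}^{(j)}_n+\gamma_{n(p+1)+j+2}\,\mathcal{L}^{(j)}_{n+1},$$ $$(z-C)\mathcal{L}^{(j)}_n=\mathcal{L}^{(j+1)}_{n-1}+\sum_{s=0}^{p-1}g^{(j)}_{n+s+1,n+1}\,\mathcal{L}^{(j+1)}_{n+s},$$ and, for all $n\ge0$, $$(z-C)\mathcal{L}_n=\mathcal{L}^{(p)}_{n-1}-\frac{P_{n+1}(C)}{P_n(C)}\mathcal{L}^{(p)}_n.$$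
   Context: Fix $p\in\mathbb{N}$. Let $J=(a_{n,m})_{n,m\ge0}$ be an infinite matrix with $a_{n,n+1}=1$, $a_{n,m}=0$ for $m>n+1$ or $m<n-p$, and $a_{n+p,n}\neq0$ for all $n\ge0$. Define polynomials by $P_{-p}=\cdots=P_{-1}=0$, $P_0\equiv1$, $P_{n+1}(z)=(z-a_{n,n})P_n(z)-\sum_{i=1}^p a_{n,n-i}P_{n-i}(z)$ for $n\ge0$. Fix $C\in\mathbb{C}$ with $P_n(C)\neq0$ for all $n\ge1$. A Darboux factorization of $J-CI$ is a factorization $J-CI=L^{(1)}L^{(2)}\cdots L^{(p)}U$ where, indexing rows and columns by $1,2,\ldots$, $U$ is upper bidiagonal with $U_{k,k}=\gamma_{(k-1)(p+1)+1}$, $U_{k,k+1}=1$, and for $j=1,\ldots,p$, $L^{(j)}$ is lower bidiagonal with ones on the diagonal and $L^{(j)}_{k+1,k}=\gamma_{(k-1)(p+1)+j+1}\neq0$ for all $k\ge1$ (the $\gamma_i$ being complex numbers). Its Darboux transformations are $J^{(j)}=CI+L^{(j+1)}\cdots L^{(p)}UL^{(1)}\cdots L^{(j)}$, $j=1,\ldots,p$; also $J^{(0)}:=J$. Each $J^{(j)}$ is lower Hessenberg with ones on the superdiagonal, and $\{P^{(j)}_n\}_{n\ge0}$ denotes the unique sequence of polynomials with $P^{(j)}_0\equiv1$ such that $v^{(j)}(z)=(P^{(j)}_0(z),P^{(j)}_1(z),\ldots)^T$ satisfies $J^{(j)}v^{(j)}(z)=zv^{(j)}(z)$; $P^{(0)}_n=P_n$.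 For a sequence of polynomials $\{Q_n\}$ with $\deg Q_n=n$, its dual sequence is the sequence of linear functionals $\{\mathcal{M}_n\}$ on the polynomial space with $\mathcal{M}_j[Q_i]=\delta_{i,j}$. For a functional $\mu$, $(z-C)\mu$ is the functional $q\mapsto\mu[(z-C)q]$. *)

theory Defs
  imports Complex_Main "HOL-Computational_Algebra.Polynomial"
begin

text \<open>Infinite matrices, rows and columns indexed by 0,1,2,... (paper index k = our index k-1).\<close>
type_synonym imat = "nat \<Rightarrow> nat \<Rightarrow> complex"

definition ident :: imat where
  "ident i k = (if i = k then 1 else 0)"

text \<open>Product of row-finite infinite matrices (the sum has finite support in all uses).\<close>
definition mmult :: "imat \<Rightarrow> imat \<Rightarrow> imat" where
  "mmult A B i k = (\<Sum>j. A i j * B j k)"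

definition mprod :: "imat list \<Rightarrow> imat" where
  "mprod Ms = foldr mmult Ms ident"

text \<open>Paper: U_{k,k} = gamma_{(k-1)(p+1)+1}, U_{k,k+1} = 1;
  L^{(j)}_{k,k} = 1, L^{(j)}_{k+1,k} = gamma_{(k-1)(p+1)+j+1}.\<close>
definition Umat :: "nat \<Rightarrow> (nat \<Rightarrow> complex) \<Rightarrow> imat" where
  "Umat p \<gamma> i k = (if k = i then \<gamma> (i*(p+1)+1) else if k = i + 1 then 1 else 0)"

definition Lmat :: "nat \<Rightarrow> (nat \<Rightarrow> complex) \<Rightarrow> nat \<Rightarrow> imat" where
  "Lmat p \<gamma> j i k = (if i = k then 1 else if i = k + 1 then \<gamma> (k*(p+1)+j+1) else 0)"

definition Lprod :: "nat \<Rightarrow> (nat \<Rightarrow> complex) \<Rightarrow> nat \<Rightarrow> nat \<Rightarrow> imat" where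
  "Lprod p \<gamma> a b = mprod (map (Lmat p \<gamma>) [a..<b+1])"

definition darboux_factorization ::
  "nat \<Rightarrow> imat \<Rightarrow> complex \<Rightarrow> (nat \<Rightarrow> complex) \<Rightarrow> bool" where
  "darboux_factorization p J C \<gamma> \<longleftrightarrow>
     (\<forall>j\<in>{1..p}. \<forall>k. \<gamma> (k*(p+1)+j+1) \<noteq> 0) \<and>
     (\<lambda>i k. J i k - C * ident i k) = mmult (Lprod p \<gamma> 1 p) (Umat p \<gamma>)"

definition darboux_trans :: "nat \<Rightarrow> imat \<Rightarrow> complex \<Rightarrow> (nat \<Rightarrow> complex) \<Rightarrow> nat \<Rightarrow> imat" where
  "darboux_trans p J C \<gamma> j =
     (if j = 0 then J
      else (\<lambda>i k. C * ident i k +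
              mmult (mmult (Lprod p \<gamma> (j+1) p) (Umat p \<gamma>)) (Lprod p \<gamma> 1 j) i k))"

definition Gmat :: "nat \<Rightarrow> (nat \<Rightarrow> complex) \<Rightarrow> nat \<Rightarrow> imat" where
  "Gmat p \<gamma> j = mmult (mmult (Lprod p \<gamma> (j+2) p) (Umat p \<gamma>)) (Lprod p \<gamma> 1 j)"

text \<open>For a lower Hessenberg matrix A with ones on the superdiagonal, the polynomials with
  Q_0 = 1 and A (Q_0,Q_1,...)^T = z (Q_0,Q_1,...)^T, i.e. row n reads
  sum_{m<=n} A_{n,m} Q_m + Q_{n+1} = z Q_n.\<close>
fun hess_list :: "imat \<Rightarrow> nat \<Rightarrow> complex poly list" where
  "hess_list A 0 = [1]"
| "hess_list A (Suc n) = (let xs = hess_list A n in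
      xs @ [[:0, 1:] * xs ! n - (\<Sum>m\<le>n. smult (A n m) (xs ! m))])"

definition hess_poly :: "imat \<Rightarrow> nat \<Rightarrow> complex poly" where
  "hess_poly A n = hess_list A n ! n"

definition lin_functional :: "(complex poly \<Rightarrow> complex) \<Rightarrow> bool" where
  "lin_functional M \<longleftrightarrow> (\<forall>p q. M (p + q) = M p + M q) \<and> (\<forall>c p. M (smult c p) = c * M p)"

definition dual_seq :: "(nat \<Rightarrow> complex poly) \<Rightarrow> nat \<Rightarrow> (complex poly \<Rightarrow> complex)" where
  "dual_seq Q = (THE M. (\<forall>n. lin_functional (M n)) \<and>
                        (\<forall>i j. M j (Q i) = (if i = j then 1 else 0)))"

definition shift_fun :: "complex \<Rightarrow> (complex poly \<Rightarrow> complex) \<Rightarrow> (complex poly \<Rightarrow> complex)" where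
  "shift_fun C \<mu> = (\<lambda>q. \<mu> ([:-C, 1:] * q))"

end

theory Submission
  imports Defs
begin

text \<open>Write \<open>J^(j) - C I = L^(j+1) G^(j)\<close>, so that
  \<open>J^(j+1) - C I = G^(j) L^(j+1)\<close>, and likewise \<open>J - C I = L U\<close>,
  \<open>J^(p) - C I = U L\<close> with \<open>L = L^(1) \<cdots> L^(p)\<close>.
  Whenever \<open>A - C I = M X\<close> and \<open>B - C I = X M\<close> with \<open>M\<close> unit lower triangular, the Hessenberg
  polynomials satisfy \<open>P\<^sub>A = M P\<^sub>B\<close> and \<open>(z - C) P\<^sub>B = X P\<^sub>A\<close>, since normalized
  solutions of \<open>(z - C) w = (A - C I) w\<close> are unique. Evaluating the dual functionals on these
  relations and expanding in the dual basis (finitely many terms survive because \<open>M\<close> and \<open>X\<close>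
  are banded) gives the three identities; the diagonal entries of \<open>U\<close> equal
  \<open>-P_(n+1)(C) / P_n(C)\<close> by evaluating \<open>(z - C) P^(p) = U P\<close> at \<open>z = C\<close>.\<close>

definition upper_banded :: "nat \<Rightarrow> imat \<Rightarrow> bool" where
  "upper_banded a A \<longleftrightarrow> (\<forall>i k. i + a < k \<longrightarrow> A i k = 0)"

definition lower_banded :: "nat \<Rightarrow> imat \<Rightarrow> bool" where
  "lower_banded a A \<longleftrightarrow> (\<forall>i k. k + a < i \<longrightarrow> A i k = 0)"

lemma upper_bandedD: "upper_banded a A \<Longrightarrow> i + a < k \<Longrightarrow> A i k = 0"
  by (simp add: upper_banded_def)

lemma lower_bandedD: "lower_banded a A \<Longrightarrow> k + a < i \<Longrightarrow> A i k = 0"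
  by (simp add: lower_banded_def)

lemma lower_banded_mono: "lower_banded a A \<Longrightarrow> a \<le> b \<Longrightarrow> lower_banded b A"
  by (auto simp: lower_banded_def)

lemma upper_banded_ident: "upper_banded 0 ident" and lower_banded_ident: "lower_banded 0 ident"
  by (auto simp: upper_banded_def lower_banded_def ident_def)

lemma mmult_upper_banded:
  assumes "upper_banded a A"
  shows "mmult A B i k = (\<Sum>l\<le>i+a. A i l * B l k)"
  unfolding mmult_def by (rule suminf_finite) (use assms in \<open>auto simp: upper_banded_def\<close>)

lemma mmult_ident_right [simp]: "mmult A ident = A"
proof (intro ext)
  fix i k show "mmult A ident i k = A i k"
    unfolding mmult_def by (subst suminf_finite[of "{k}"]) (auto simp: ident_def)
qed

lemma mmult_ident_left [simp]: "mmult ident A = A"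
proof (intro ext)
  fix i k show "mmult ident A i k = A i k"
    unfolding mmult_def by (subst suminf_finite[of "{i}"]) (auto simp: ident_def)
qed

lemma sum_swap_banded:
  fixes f :: "nat \<Rightarrow> nat \<Rightarrow> 'a::comm_monoid_add"
  assumes "\<And>j l. j + b < l \<Longrightarrow> f j l = 0"
  shows "(\<Sum>l\<le>N+b. \<Sum>j\<le>N. f j l) = (\<Sum>j\<le>N. \<Sum>l\<le>j+b. f j l)"
proof -
  have "(\<Sum>l\<le>N+b. \<Sum>j\<le>N. f j l) = (\<Sum>j\<le>N. \<Sum>l\<le>N+b. f j l)"
    by (rule sum.swap)
  also have "\<dots> = (\<Sum>j\<le>N. \<Sum>l\<le>j+b. f j l)"
    by (intro sum.cong refl sum.mono_neutral_right) (auto intro: assms)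
  finally show ?thesis .
qed

lemma upper_banded_mmult:
  assumes "upper_banded a A" "upper_banded b B"
  shows "upper_banded (a + b) (mmult A B)"
  unfolding upper_banded_def
  using assms(2) by (auto simp: mmult_upper_banded[OF assms(1)] upper_banded_def intro!: sum.neutral)

lemma lower_banded_mmult:
  assumes "upper_banded c A" "lower_banded a A" "lower_banded b B"
  shows "lower_banded (a + b) (mmult A B)"
  unfolding lower_banded_def
proof (intro allI impI)
  fix i k assume "k + (a + b) < i"
  then have "A i l * B l k = 0" for l
    using lower_bandedD[OF assms(2), of l i] lower_bandedD[OF assms(3), of k l]
    by (cases "l + a < i") auto
  then show "mmult A B i k = 0"
    by (simp add: mmult_upper_banded[OF assms(1)] del: mult_eq_0_iff)
qed

lemma mmult_assoc:
  assumes "upper_banded a A" "upper_banded b B"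
  shows "mmult (mmult A B) D = mmult A (mmult B D)"
proof (intro ext)
  fix i k
  have "mmult (mmult A B) D i k = (\<Sum>l\<le>i+a+b. \<Sum>j\<le>i+a. A i j * B j l * D l k)"
    by (simp add: mmult_upper_banded[OF upper_banded_mmult[OF assms]]
        mmult_upper_banded[OF assms(1)] add.assoc sum_distrib_right)
  also have "\<dots> = (\<Sum>j\<le>i+a. \<Sum>l\<le>j+b. A i j * B j l * D l k)"
    by (rule sum_swap_banded) (simp add: upper_bandedD[OF assms(2)])
  also have "\<dots> = mmult A (mmult B D) i k"
    by (simp add: mmult_upper_banded[OF assms(1)] mmult_upper_banded[OF assms(2)]
        sum_distrib_left mult.assoc)
  finally show "mmult (mmult A B) D i k = mmult A (mmult B D) i k" .
qed

lemma mmult_diag: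
  assumes "upper_banded 0 M" "upper_banded 0 N"
  shows "mmult M N i i = M i i * N i i"
  by (simp add: mmult_upper_banded[OF assms(1)] upper_bandedD[OF assms(2)] sum.remove[of _ i])

lemma mmult_superdiag_left:
  assumes "upper_banded 0 M" "upper_banded 1 X"
  shows "mmult M X i (i+1) = M i i * X i (i+1)"
  by (simp add: mmult_upper_banded[OF assms(1)] upper_bandedD[OF assms(2)] sum.remove[of _ i])

lemma mmult_superdiag_right:
  assumes "upper_banded 1 X" "upper_banded 0 M"
  shows "mmult X M i (i+1) = X i (i+1) * M (i+1) (i+1)"
  using mmult_upper_banded[OF assms(1), of M i "i+1"]
  by (simp add: upper_bandedD[OF assms(2)] sum.remove[of _ "i+1"])

lemma upper_banded_mprod:
  "\<forall>M\<in>set Ms. upper_banded 0 M \<Longrightarrow> upper_banded 0 (mprod Ms)"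
  by (induction Ms) (auto simp: mprod_def upper_banded_ident dest: upper_banded_mmult)

lemma mprod_snoc:
  assumes "\<forall>M\<in>set Ms. upper_banded 0 M"
  shows "mprod (Ms @ [X]) = mmult (mprod Ms) X"
  using assms
proof (induction Ms)
  case Nil then show ?case by (simp add: mprod_def)
next
  case (Cons M Ms)
  then have "mprod ((M # Ms) @ [X]) = mmult M (mmult (mprod Ms) X)"
    by (simp add: mprod_def)
  also have "\<dots> = mmult (mprod (M # Ms)) X"
    using mmult_assoc[of 0 M 0 "mprod Ms" X] Cons.prems upper_banded_mprod by (simp add: mprod_def)
  finally show ?case .
qed

lemma smult_sum_right: "smult a (\<Sum>i\<in>S. f i) = (\<Sum>i\<in>S. smult a (f i))"
  by (induct S rule: infinite_finite_induct) (auto simp: smult_add_right)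

text \<open>The bandwidth \<open>b\<close> is an explicit parameter: polynomials carry no topology, so the
  product with a vector of polynomials has to be a finite sum.\<close>

definition mat_vec :: "nat \<Rightarrow> imat \<Rightarrow> (nat \<Rightarrow> complex poly) \<Rightarrow> nat \<Rightarrow> complex poly" where
  "mat_vec b A v i = (\<Sum>m\<le>i+b. smult (A i m) (v m))"

lemma mat_vec_mmult:
  assumes "upper_banded a A" "upper_banded b B"
  shows "mat_vec (a + b) (mmult A B) v = mat_vec a A (mat_vec b B v)"
proof (intro ext)
  fix i
  have "mat_vec (a + b) (mmult A B) v i = (\<Sum>m\<le>i+a+b. \<Sum>l\<le>i+a. smult (A i l * B l m) (v m))"
    by (simp add: mat_vec_def mmult_upper_banded[OF assms(1)] add.assoc smult_sum)
  also have "\<dots> = (\<Sum>l\<le>i+a. \<Sum>m\<le>l+b. smult (A i l * B l m) (v m))"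
    by (rule sum_swap_banded) (simp add: upper_bandedD[OF assms(2)])
  also have "\<dots> = mat_vec a A (mat_vec b B v) i"
    by (simp add: mat_vec_def smult_sum_right)
  finally show "mat_vec (a + b) (mmult A B) v i = mat_vec a A (mat_vec b B v) i" .
qed

lemma mat_vec_mult: "mat_vec b A (\<lambda>i. c * v i) = (\<lambda>i. c * mat_vec b A v i)"
  by (auto simp: mat_vec_def sum_distrib_left)

lemma mat_vec_unit_superdiag:
  assumes "D n (n+1) = 1"
  shows "mat_vec 1 D w n = w (n+1) + (\<Sum>m\<le>n. smult (D n m) (w m))"
  using assms by (simp add: mat_vec_def)

lemma hess_list_length: "length (hess_list A n) = n + 1"
  by (induction n) (auto simp: Let_def)

lemma hess_list_nth: "m \<le> n \<Longrightarrow> hess_list A n ! m = hess_poly A m"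
proof (induction n)
  case 0 then show ?case by (simp add: hess_poly_def)
next
  case (Suc n)
  then show ?case
    using hess_list_length[of A n] by (cases "m = Suc n") (auto simp: hess_poly_def Let_def nth_append)
qed

lemma hess_poly_0: "hess_poly A 0 = 1"
  by (simp add: hess_poly_def)

lemma hess_poly_Suc:
  "hess_poly A (Suc n) = [:0,1:] * hess_poly A n - (\<Sum>m\<le>n. smult (A n m) (hess_poly A m))"
proof -
  have "hess_poly A (Suc n) =
      [:0,1:] * hess_list A n ! n - (\<Sum>m\<le>n. smult (A n m) (hess_list A n ! m))"
    using hess_list_length[of A n] by (simp add: hess_poly_def Let_def nth_append)
  then show ?thesis by (simp add: hess_list_nth)
qed

lemma hess_poly_degree_lead: "degree (hess_poly A n) = n \<and> coeff (hess_poly A n) n = 1"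
proof -
  have "\<forall>m\<le>n. degree (hess_poly A m) \<le> m \<and> coeff (hess_poly A m) m = 1"
  proof (induction n)
    case 0 then show ?case by (simp add: hess_poly_0)
  next
    case (Suc n)
    let ?P = "hess_poly A"
    have ds: "degree (\<Sum>m\<le>n. smult (A n m) (?P m)) \<le> n"
      by (rule degree_sum_le) (use Suc.IH in \<open>auto intro: order.trans[OF degree_smult_le]\<close>)
    have x: "[:0,1:] * ?P n = pCons 0 (?P n)" by simp
    have "degree ([:0,1:] * ?P n) \<le> Suc n"
      using Suc.IH by (simp add: x degree_pCons_le order.trans)
    then have "degree (?P (Suc n)) \<le> Suc n"
      unfolding hess_poly_Suc using ds by (meson degree_diff_le le_Suc_eq)
    moreover have "coeff (?P (Suc n)) (Suc n) = 1"
      unfolding hess_poly_Suc using Suc.IH ds by (simp add: x coeff_eq_0)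
    ultimately show ?case using Suc.IH le_Suc_eq by auto
  qed
  then show ?thesis by (auto intro!: antisym le_degree)
qed

lemma hess_poly_eq_iff:
  assumes "upper_banded 1 D" and unit: "\<forall>n. D n (n+1) = 1"
  shows "w = hess_poly (\<lambda>i k. C * ident i k + D i k) \<longleftrightarrow>
           w 0 = 1 \<and> (\<forall>n. [:-C,1:] * w n = mat_vec 1 D w n)"
proof -
  let ?P = "hess_poly (\<lambda>i k. C * ident i k + D i k)"
  have eigen_iff_rec: "(\<forall>n. [:-C,1:] * u n = mat_vec 1 D u n) \<longleftrightarrow>
      (\<forall>n. u (Suc n) = [:-C,1:] * u n - (\<Sum>m\<le>n. smult (D n m) (u m)))" for u
  proof -
    have "mat_vec 1 D u n = u (Suc n) + (\<Sum>m\<le>n. smult (D n m) (u m))" for n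
      using mat_vec_unit_superdiag[of D n u] unit by simp
    then show ?thesis by (auto simp: eq_diff_eq diff_eq_eq ac_simps)
  qed
  have "(\<Sum>m\<le>n. smult (C * ident n m + D n m) (?P m)) =
        smult C (?P n) + (\<Sum>m\<le>n. smult (D n m) (?P m))" for n
    by (simp add: smult_add_left sum.distrib ident_def if_distrib[of "\<lambda>x. smult (C * x) _"]
        cong: if_cong)
  then have P_rec: "?P (Suc n) = [:-C,1:] * ?P n - (\<Sum>m\<le>n. smult (D n m) (?P m))" for n
    by (simp add: hess_poly_Suc algebra_simps smult_add_left)
  have "w = ?P" if w0: "w 0 = 1" and w_rec: "\<forall>n. w (Suc n) = [:-C,1:] * w n - (\<Sum>m\<le>n. smult (D n m) (w m))"
  proof -
    have "\<forall>m\<le>n. w m = ?P m" for n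
      by (induction n) (use w0 w_rec P_rec in \<open>auto simp: hess_poly_0 le_Suc_eq\<close>)
    then show ?thesis by auto
  qed
  then show ?thesis
    using eigen_iff_rec P_rec by (auto simp: hess_poly_0)
qed


definition monic_basis :: "(nat \<Rightarrow> complex poly) \<Rightarrow> bool" where
  "monic_basis Q \<longleftrightarrow> (\<forall>n. degree (Q n) = n \<and> coeff (Q n) n = 1)"

lemma monic_basis_hess_poly: "monic_basis (hess_poly A)"
  by (simp add: monic_basis_def hess_poly_degree_lead)

lemma degree_sum_smult_monic_basis:
  assumes "monic_basis Q"
  shows "degree (\<Sum>i\<le>N. smult (c i) (Q i)) \<le> N"
  by (rule degree_sum_le)
    (use assms in \<open>auto simp: monic_basis_def intro: order.trans[OF degree_smult_le]\<close>)

lemma monic_basis_span: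
  assumes "monic_basis Q" "degree q \<le> N"
  shows "\<exists>c. q = (\<Sum>i\<le>N. smult (c i) (Q i))"
  using assms(2)
proof (induction N arbitrary: q)
  case 0
  have "Q 0 = 1"
    using assms(1) by (metis degree_0_id monic_basis_def one_pCons)
  moreover have "q = [:coeff q 0:]"
    using 0 by (metis degree_0_id le_0_eq)
  ultimately have "q = smult (coeff q 0) (Q 0)"
    by simp
  then show ?case by (intro exI[of _ "\<lambda>_. coeff q 0"]) simp
next
  case (Suc N)
  define r where "r = q - smult (coeff q (Suc N)) (Q (Suc N))"
  have Q: "degree (Q (Suc N)) = Suc N" "coeff (Q (Suc N)) (Suc N) = 1"
    using assms(1) by (auto simp: monic_basis_def)
  have "coeff r i = 0" if "N < i" for i
  proof (cases "i = Suc N")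
    case True
    then show ?thesis using Q by (simp add: r_def)
  next
    case False
    then show ?thesis using that Suc.prems Q by (simp add: r_def coeff_eq_0)
  qed
  then obtain c where c: "r = (\<Sum>i\<le>N. smult (c i) (Q i))"
    using Suc.IH degree_le by blast
  have "q = (\<Sum>i\<le>Suc N. smult ((c(Suc N := coeff q (Suc N))) i) (Q i))"
    using c by (simp add: r_def) (metis diff_add_cancel)
  then show ?case by blast
qed

lemma monic_basis_independent:
  assumes "monic_basis Q" "(\<Sum>i\<le>N. smult (d i) (Q i)) = 0"
  shows "\<forall>i\<le>N. d i = 0"
  using assms(2)
proof (induction N)
  case 0
  have "coeff (Q 0) 0 = 1"
    using assms(1) by (simp add: monic_basis_def)
  moreover have "coeff (smult (d 0) (Q 0)) 0 = 0"
    using 0 by (simp del: smult_eq_0_iff)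
  ultimately show ?case by simp
next
  case (Suc N)
  have "coeff (\<Sum>i\<le>N. smult (d i) (Q i)) (Suc N) = 0"
    by (rule coeff_eq_0) (use degree_sum_smult_monic_basis[OF assms(1), of d N] in simp)
  moreover have "coeff (Q (Suc N)) (Suc N) = 1"
    using assms(1) by (simp add: monic_basis_def)
  moreover have "(\<Sum>i\<le>N. smult (d i) (Q i)) + smult (d (Suc N)) (Q (Suc N)) = 0"
    using Suc.prems by simp
  ultimately have "d (Suc N) = 0"
    by (metis add_0 coeff_0 coeff_add coeff_smult mult.right_neutral)
  then show ?case using Suc by (auto simp: le_Suc_eq)
qed

definition basis_coords :: "(nat \<Rightarrow> complex poly) \<Rightarrow> complex poly \<Rightarrow> nat \<Rightarrow> complex" where
  "basis_coords Q q = (SOME c. (\<forall>i>degree q. c i = 0) \<and> q = (\<Sum>i\<le>degree q. smult (c i) (Q i)))"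

lemma basis_coords:
  assumes "monic_basis Q"
  shows "\<forall>i>degree q. basis_coords Q q i = 0"
    and "q = (\<Sum>i\<le>degree q. smult (basis_coords Q q i) (Q i))"
proof -
  obtain c where "q = (\<Sum>i\<le>degree q. smult (c i) (Q i))"
    using monic_basis_span[OF assms] by blast
  then have "q = (\<Sum>i\<le>degree q. smult ((\<lambda>i. if i \<le> degree q then c i else 0) i) (Q i))"
    by simp
  then have "\<exists>c. (\<forall>i>degree q. c i = 0) \<and> q = (\<Sum>i\<le>degree q. smult (c i) (Q i))"
    by (intro exI[of _ "\<lambda>i. if i \<le> degree q then c i else 0"]) simp
  from someI_ex[OF this] show "\<forall>i>degree q. basis_coords Q q i = 0"
    and "q = (\<Sum>i\<le>degree q. smult (basis_coords Q q i) (Q i))"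
    unfolding basis_coords_def by blast+
qed

lemma basis_coords_expand:
  assumes "monic_basis Q" "degree q \<le> N"
  shows "q = (\<Sum>i\<le>N. smult (basis_coords Q q i) (Q i))"
proof -
  have "(\<Sum>i\<le>degree q. smult (basis_coords Q q i) (Q i)) =
        (\<Sum>i\<le>N. smult (basis_coords Q q i) (Q i))"
    by (rule sum.mono_neutral_left) (use assms(2) basis_coords(1)[OF assms(1), of q] in auto)
  then show ?thesis
    using basis_coords(2)[OF assms(1), of q] by simp
qed

lemma basis_coords_unique:
  assumes Q: "monic_basis Q" and "\<forall>i>N. c i = 0" and q: "q = (\<Sum>i\<le>N. smult (c i) (Q i))"
  shows "basis_coords Q q = c"
proof
  fix i
  have deg: "degree q \<le> N"
    unfolding q by (rule degree_sum_smult_monic_basis[OF Q])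
  then have "(\<Sum>i\<le>N. smult (c i - basis_coords Q q i) (Q i)) = 0"
    using q basis_coords_expand[OF Q deg] by (simp add: smult_diff_left sum_subtractf)
  then have "\<forall>i\<le>N. c i = basis_coords Q q i"
    using monic_basis_independent[OF Q, of "\<lambda>i. c i - basis_coords Q q i"] by auto
  moreover have "\<forall>i>N. basis_coords Q q i = 0"
    using basis_coords(1)[OF Q, of q] deg by auto
  ultimately show "basis_coords Q q i = c i"
    using assms(2) by (cases "i \<le> N") auto
qed

lemma basis_coords_add:
  assumes Q: "monic_basis Q"
  shows "basis_coords Q (q + r) = (\<lambda>i. basis_coords Q q i + basis_coords Q r i)"
proof (rule basis_coords_unique[OF Q, where N = "max (degree q) (degree r)"])
  show "\<forall>i>max (degree q) (degree r). basis_coords Q q i + basis_coords Q r i = 0"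
    using basis_coords(1)[OF Q] by simp
  have "q = (\<Sum>i\<le>max (degree q) (degree r). smult (basis_coords Q q i) (Q i))"
       "r = (\<Sum>i\<le>max (degree q) (degree r). smult (basis_coords Q r i) (Q i))"
    by (rule basis_coords_expand[OF Q]; simp)+
  then show "q + r = (\<Sum>i\<le>max (degree q) (degree r).
                        smult (basis_coords Q q i + basis_coords Q r i) (Q i))"
    by (simp add: smult_add_left sum.distrib)
qed

lemma basis_coords_smult:
  assumes Q: "monic_basis Q"
  shows "basis_coords Q (smult a q) = (\<lambda>i. a * basis_coords Q q i)"
proof (rule basis_coords_unique[OF Q, where N = "degree q"])
  show "\<forall>i>degree q. a * basis_coords Q q i = 0"
    using basis_coords(1)[OF Q] by simp
  show "smult a q = (\<Sum>i\<le>degree q. smult (a * basis_coords Q q i) (Q i))"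
    by (subst basis_coords(2)[OF Q, of q]) (simp add: smult_sum_right)
qed

lemma basis_coords_basis:
  assumes Q: "monic_basis Q"
  shows "basis_coords Q (Q n) = (\<lambda>i. if i = n then 1 else 0)"
proof (rule basis_coords_unique[OF Q, where N = n])
  have "(\<Sum>i\<le>n. smult (if i = n then 1 else 0) (Q i)) = (\<Sum>i\<le>n. if i = n then Q i else 0)"
    by (rule sum.cong) auto
  then show "Q n = (\<Sum>i\<le>n. smult (if i = n then 1 else 0) (Q i))"
    by simp
qed simp

lemma lin_functional_zero: "lin_functional \<Lambda> \<Longrightarrow> \<Lambda> 0 = 0"
  unfolding lin_functional_def by (metis mult_zero_left smult_0_left)

lemma lin_functional_sum_smult:
  assumes "lin_functional \<Lambda>"
  shows "\<Lambda> (\<Sum>l\<in>S. smult (c l) (Q l)) = (\<Sum>l\<in>S. c l * \<Lambda> (Q l))"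
  by (induction S rule: infinite_finite_induct)
    (use assms lin_functional_zero in \<open>auto simp: lin_functional_def\<close>)

lemma lin_functional_eqI:
  assumes Q: "monic_basis Q" and "lin_functional \<Lambda>" "lin_functional \<Lambda>'"
    and eq: "\<And>i. \<Lambda> (Q i) = \<Lambda>' (Q i)"
  shows "\<Lambda> = \<Lambda>'"
proof
  fix q
  obtain N c where c: "q = (\<Sum>i\<le>N. smult (c i) (Q i))"
    using monic_basis_span[OF Q order.refl] by blast
  show "\<Lambda> q = \<Lambda>' q"
    unfolding c by (simp add: lin_functional_sum_smult[OF assms(2)] lin_functional_sum_smult[OF assms(3)] eq)
qed

lemma lin_functional_sum_scaled:
  assumes "\<And>k. k \<in> S \<Longrightarrow> lin_functional (F k)"
  shows "lin_functional (\<lambda>q. \<Sum>k\<in>S. c k * F k q)"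
  using assms by (induction S rule: infinite_finite_induct)
    (auto simp: lin_functional_def algebra_simps sum.distrib sum_distrib_left)

lemma lin_functional_shift_fun:
  assumes "lin_functional \<Lambda>"
  shows "lin_functional (shift_fun C \<Lambda>)"
  using assms by (simp only: lin_functional_def shift_fun_def distrib_left mult_smult_right) simp

lemma dual_seq:
  assumes Q: "monic_basis Q"
  shows "lin_functional (dual_seq Q n)" and "dual_seq Q n (Q i) = (if i = n then 1 else 0)"
proof -
  let ?dual = "\<lambda>\<Lambda>. (\<forall>n. lin_functional (\<Lambda> n)) \<and> (\<forall>i n. \<Lambda> n (Q i) = (if i = n then 1 else 0))"
  have coords: "?dual (\<lambda>n q. basis_coords Q q n)"
    by (auto simp: lin_functional_def basis_coords_add[OF Q] basis_coords_smult[OF Q]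
        basis_coords_basis[OF Q])
  have "\<Lambda> = (\<lambda>n q. basis_coords Q q n)" if "?dual \<Lambda>" for \<Lambda>
    using lin_functional_eqI[OF Q] that coords by (intro ext) metis
  then have "?dual (dual_seq Q)"
    unfolding dual_seq_def using theI[of ?dual, OF coords] by blast
  then show "lin_functional (dual_seq Q n)" "dual_seq Q n (Q i) = (if i = n then 1 else 0)"
    by auto
qed

lemma dual_seq_expansion:
  assumes Q: "monic_basis Q" and "lin_functional \<Lambda>" "finite S"
    and vanish: "\<And>k. k \<notin> S \<Longrightarrow> \<Lambda> (Q k) = 0"
  shows "\<Lambda> = (\<lambda>q. \<Sum>k\<in>S. \<Lambda> (Q k) * dual_seq Q k q)"
proof (rule lin_functional_eqI[OF Q assms(2) lin_functional_sum_scaled[OF dual_seq(1)[OF Q]]])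
  fix i
  have "(\<Sum>k\<in>S. \<Lambda> (Q k) * dual_seq Q k (Q i)) = (\<Sum>k\<in>S. if k = i then \<Lambda> (Q i) else 0)"
    by (rule sum.cong) (simp_all add: dual_seq(2)[OF Q])
  then show "\<Lambda> (Q i) = (\<Sum>k\<in>S. \<Lambda> (Q k) * dual_seq Q k (Q i))"
    using assms(3) vanish by simp
qed

lemma dual_seq_mat_vec:
  assumes "monic_basis Q"
  shows "dual_seq Q n (mat_vec b A Q k) = (if n \<le> k + b then A k n else 0)"
proof -
  have "(\<Sum>m\<le>k+b. A k m * dual_seq Q n (Q m)) = (\<Sum>m\<le>k+b. if m = n then A k n else 0)"
    by (rule sum.cong) (simp_all add: dual_seq(2)[OF assms])
  then show ?thesis
    by (simp add: mat_vec_def lin_functional_sum_smult[OF dual_seq(1)[OF assms]])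
qed

lemma sum_atLeastAtMost_pred_split:
  fixes f :: "nat \<Rightarrow> 'a::comm_monoid_add"
  shows "(\<Sum>k\<in>{n-1..n+a}. f k) = (if n = 0 then 0 else f (n-1)) + (\<Sum>s<Suc a. f (n+s))"
proof -
  have "(\<Sum>k\<in>{n..n+a}. f k) = (\<Sum>s<Suc a. f (n+s))"
    using sum.shift_bounds_cl_nat_ivl[of f 0 n a]
    by (simp add: atLeast0AtMost lessThan_Suc_atMost add.commute)
  moreover have "{n-1..n+a} = (if n = 0 then {} else {n-1}) \<union> {n..n+a}"
    by auto
  ultimately show ?thesis
    by (cases "n = 0") (auto simp: sum.union_disjoint)
qed

locale darboux_step =
  fixes C :: complex and M X A B :: imat
  assumes M: "upper_banded 0 M" "\<forall>i. M i i = 1"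
    and X: "upper_banded 1 X" "\<forall>i. X i (i+1) = 1"
    and A: "A = (\<lambda>i k. C * ident i k + mmult M X i k)"
    and B: "B = (\<lambda>i k. C * ident i k + mmult X M i k)"
begin

text \<open>\<open>M P\<^sub>B\<close> solves \<open>(z - C) w = M X w\<close> because \<open>P\<^sub>B\<close> solves \<open>(z - C) v = X M v\<close>.\<close>

lemma hess_poly_transfer:
  shows "hess_poly A = mat_vec 0 M (hess_poly B)"
    and "[:-C,1:] * hess_poly B k = mat_vec 1 X (hess_poly A) k"
proof -
  have MX: "upper_banded 1 (mmult M X)" "\<forall>n. mmult M X n (n+1) = 1"
    using upper_banded_mmult[OF M(1) X(1)] mmult_superdiag_left[OF M(1) X(1)] M(2) X(2)
    by simp_all
  have XM: "upper_banded 1 (mmult X M)" "\<forall>n. mmult X M n (n+1) = 1"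
    using upper_banded_mmult[OF X(1) M(1)] mmult_superdiag_right[OF X(1) M(1)] M(2) X(2)
    by simp_all
  let ?v = "hess_poly B"
  let ?w = "mat_vec 0 M ?v"
  have v_eigen: "[:-C,1:] * ?v n = mat_vec 1 X ?w n" for n
    using hess_poly_eq_iff[OF XM, of ?v C] mat_vec_mmult[OF X(1) M(1), of ?v] B by simp
  have "(\<lambda>n. [:-C,1:] * ?w n) = mat_vec 0 M (\<lambda>n. [:-C,1:] * ?v n)"
    by (simp only: mat_vec_mult)
  also have "\<dots> = mat_vec 1 (mmult M X) ?w"
    using mat_vec_mmult[OF M(1) X(1), of ?w] v_eigen by simp
  finally have "\<forall>n. [:-C,1:] * ?w n = mat_vec 1 (mmult M X) ?w n"
    by (simp add: fun_eq_iff)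
  moreover have "?w 0 = 1"
    using M(2) by (simp add: mat_vec_def hess_poly_0)
  ultimately have "?w = hess_poly A"
    unfolding A using hess_poly_eq_iff[OF MX] by blast
  then show "hess_poly A = mat_vec 0 M (hess_poly B)"
    by simp
  show "[:-C,1:] * hess_poly B k = mat_vec 1 X (hess_poly A) k"
    using v_eigen \<open>?w = hess_poly A\<close> by simp
qed

lemma dual_seq_B:
  assumes "lower_banded a M"
  shows "dual_seq (hess_poly B) n = (\<lambda>q. \<Sum>k\<in>{n..n+a}. M k n * dual_seq (hess_poly A) k q)"
proof -
  let ?\<Lambda> = "dual_seq (hess_poly B) n"
  have \<Lambda>_A: "?\<Lambda> (hess_poly A k) = (if n \<le> k then M k n else 0)" for k
    unfolding hess_poly_transfer(1) using dual_seq_mat_vec[OF monic_basis_hess_poly] by simp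
  have "?\<Lambda> = (\<lambda>q. \<Sum>k\<in>{n..n+a}. ?\<Lambda> (hess_poly A k) * dual_seq (hess_poly A) k q)"
    by (rule dual_seq_expansion[OF monic_basis_hess_poly dual_seq(1)[OF monic_basis_hess_poly]])
      (auto simp: \<Lambda>_A lower_bandedD[OF assms])
  then show ?thesis
    by (simp add: \<Lambda>_A)
qed

lemma shift_dual_seq_A:
  assumes "lower_banded a X"
  shows "shift_fun C (dual_seq (hess_poly A) n) =
           (\<lambda>q. \<Sum>k\<in>{n-1..n+a}. X k n * dual_seq (hess_poly B) k q)"
proof -
  let ?\<Lambda> = "shift_fun C (dual_seq (hess_poly A) n)"
  have \<Lambda>_B: "?\<Lambda> (hess_poly B k) = (if n \<le> k + 1 then X k n else 0)" for k
    unfolding shift_fun_def hess_poly_transfer(2)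
    using dual_seq_mat_vec[OF monic_basis_hess_poly] by simp
  have "?\<Lambda> = (\<lambda>q. \<Sum>k\<in>{n-1..n+a}. ?\<Lambda> (hess_poly B k) * dual_seq (hess_poly B) k q)"
    by (rule dual_seq_expansion[OF monic_basis_hess_poly
          lin_functional_shift_fun[OF dual_seq(1)[OF monic_basis_hess_poly]]])
      (auto simp: \<Lambda>_B lower_bandedD[OF assms])
  also have "\<dots> = (\<lambda>q. \<Sum>k\<in>{n-1..n+a}. X k n * dual_seq (hess_poly B) k q)"
    by (intro ext sum.cong) (auto simp: \<Lambda>_B)
  finally show ?thesis .
qed

end

lemma Lmat_banded: "upper_banded 0 (Lmat p \<gamma> j)" "lower_banded 1 (Lmat p \<gamma> j)"
  and Lmat_diag: "Lmat p \<gamma> j i i = 1"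
  by (auto simp: upper_banded_def lower_banded_def Lmat_def)

lemma Umat_banded: "upper_banded 1 (Umat p \<gamma>)" "lower_banded 0 (Umat p \<gamma>)"
  and Umat_superdiag: "Umat p \<gamma> i (i+1) = 1"
  by (auto simp: upper_banded_def lower_banded_def Umat_def)

lemma mprod_unit_lower_bidiagonal:
  assumes "\<forall>M\<in>set Ms. upper_banded 0 M \<and> lower_banded 1 M \<and> (\<forall>i. M i i = 1)"
  shows "upper_banded 0 (mprod Ms) \<and> lower_banded (length Ms) (mprod Ms) \<and> (\<forall>i. mprod Ms i i = 1)"
  using assms
proof (induction Ms)
  case Nil
  then show ?case by (simp add: mprod_def upper_banded_ident lower_banded_ident) (simp add: ident_def)
next
  case (Cons M Ms)
  then show ?case
    using upper_banded_mmult[of 0 M 0 "mprod Ms"] lower_banded_mmult[of 0 M 1 "length Ms" "mprod Ms"]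
      mmult_diag[of M "mprod Ms"]
    by (simp add: mprod_def)
qed

lemma Lprod_banded: "upper_banded 0 (Lprod p \<gamma> a b)" "lower_banded (b+1-a) (Lprod p \<gamma> a b)"
  and Lprod_diag: "Lprod p \<gamma> a b i i = 1"
  using mprod_unit_lower_bidiagonal[of "map (Lmat p \<gamma>) [a..<b+1]"]
  by (auto simp: Lprod_def Lmat_banded Lmat_banded(2)[simplified] Lmat_diag simp del: upt_Suc)

lemma Lprod_empty: "b < a \<Longrightarrow> Lprod p \<gamma> a b = ident"
  by (simp add: Lprod_def mprod_def)

lemma Lprod_Cons: "a \<le> b \<Longrightarrow> Lprod p \<gamma> a b = mmult (Lmat p \<gamma> a) (Lprod p \<gamma> (a+1) b)"
  by (simp add: Lprod_def mprod_def upt_conv_Cons del: upt_Suc)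

lemma Lprod_snoc: "Lprod p \<gamma> 1 (j+1) = mmult (Lprod p \<gamma> 1 j) (Lmat p \<gamma> (j+1))"
  using mprod_snoc[of "map (Lmat p \<gamma>) [1..<j+1]" "Lmat p \<gamma> (j+1)"]
  by (simp add: Lprod_def Lmat_banded)

lemma Gmat_banded: "upper_banded 1 (Gmat p \<gamma> j)"
  unfolding Gmat_def
  using upper_banded_mmult[OF upper_banded_mmult[OF Lprod_banded(1) Umat_banded(1)] Lprod_banded(1)]
  by simp

lemma Gmat_superdiag: "Gmat p \<gamma> j i (i+1) = 1"
proof -
  have "upper_banded 1 (mmult (Lprod p \<gamma> (j+2) p) (Umat p \<gamma>))"
    using upper_banded_mmult[OF Lprod_banded(1) Umat_banded(1)] by simp
  then show ?thesis
    using mmult_superdiag_right mmult_superdiag_left[OF Lprod_banded(1) Umat_banded(1)]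
    by (simp add: Gmat_def Lprod_banded Lprod_diag Umat_superdiag[simplified])
qed

lemma Gmat_lower_banded:
  assumes "j < p"
  shows "lower_banded (p - 1) (Gmat p \<gamma> j)"
proof -
  have "lower_banded (p+1-(j+2) + 0) (mmult (Lprod p \<gamma> (j+2) p) (Umat p \<gamma>))"
    by (rule lower_banded_mmult[OF Lprod_banded Umat_banded(2)])
  then have "lower_banded (p+1-(j+2) + 0 + (j+1-1)) (Gmat p \<gamma> j)"
    unfolding Gmat_def
    by (rule lower_banded_mmult[OF upper_banded_mmult[OF Lprod_banded(1) Umat_banded(1)] _
          Lprod_banded(2)])
  then show ?thesis
    by (rule lower_banded_mono) (use assms in simp)
qed

lemma darboux_trans_eq:
  assumes "darboux_factorization p J C \<gamma>" "j \<le> p"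
  shows "darboux_trans p J C \<gamma> j =
    (\<lambda>i k. C * ident i k + mmult (mmult (Lprod p \<gamma> (j+1) p) (Umat p \<gamma>)) (Lprod p \<gamma> 1 j) i k)"
proof (cases "j = 0")
  case True
  have "J i k - C * ident i k = mmult (Lprod p \<gamma> 1 p) (Umat p \<gamma>) i k" for i k
    using assms(1) unfolding darboux_factorization_def by metis
  then show ?thesis
    using True by (auto simp: darboux_trans_def Lprod_empty algebra_simps)
qed (simp add: darboux_trans_def)

lemma darboux_step_Lmat_Gmat:
  assumes "darboux_factorization p J C \<gamma>" "j < p"
  shows "darboux_step C (Lmat p \<gamma> (j+1)) (Gmat p \<gamma> j)
           (darboux_trans p J C \<gamma> j) (darboux_trans p J C \<gamma> (j+1))"
proof
  have "mmult (mmult (Lprod p \<gamma> (j+1) p) (Umat p \<gamma>)) (Lprod p \<gamma> 1 j) =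
        mmult (Lmat p \<gamma> (j+1)) (Gmat p \<gamma> j)"
    using assms(2)
    by (simp add: Lprod_Cons Gmat_def mmult_assoc[OF Lmat_banded(1) Lprod_banded(1)]
        mmult_assoc[OF Lmat_banded(1) upper_banded_mmult[OF Lprod_banded(1) Umat_banded(1)]])
  then show "darboux_trans p J C \<gamma> j =
      (\<lambda>i k. C * ident i k + mmult (Lmat p \<gamma> (j+1)) (Gmat p \<gamma> j) i k)"
    using darboux_trans_eq[OF assms(1)] assms(2) by simp
  have "mmult (mmult (Lprod p \<gamma> (j+2) p) (Umat p \<gamma>)) (Lprod p \<gamma> 1 (j+1)) =
        mmult (mmult (Lprod p \<gamma> (j+2) p) (Umat p \<gamma>)) (mmult (Lprod p \<gamma> 1 j) (Lmat p \<gamma> (j+1)))"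
    by (simp only: Lprod_snoc)
  also have "\<dots> = mmult (Gmat p \<gamma> j) (Lmat p \<gamma> (j+1))"
    unfolding Gmat_def
    by (rule mmult_assoc[OF upper_banded_mmult[OF Lprod_banded(1) Umat_banded(1)] Lprod_banded(1),
          symmetric])
  finally have "mmult (mmult (Lprod p \<gamma> (j+2) p) (Umat p \<gamma>)) (Lprod p \<gamma> 1 (j+1)) =
        mmult (Gmat p \<gamma> j) (Lmat p \<gamma> (j+1))" .
  then show "darboux_trans p J C \<gamma> (j+1) =
      (\<lambda>i k. C * ident i k + mmult (Gmat p \<gamma> j) (Lmat p \<gamma> (j+1)) i k)"
    using darboux_trans_eq[OF assms(1), of "j+1"] assms(2) by (simp add: add.assoc)
qed (use Lmat_banded Lmat_diag Gmat_banded Gmat_superdiag in auto)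

lemma darboux_step_Lprod_Umat:
  assumes "darboux_factorization p J C \<gamma>"
  shows "darboux_step C (Lprod p \<gamma> 1 p) (Umat p \<gamma>) J (darboux_trans p J C \<gamma> p)"
proof
  show "J = (\<lambda>i k. C * ident i k + mmult (Lprod p \<gamma> 1 p) (Umat p \<gamma>) i k)"
    using darboux_trans_eq[OF assms, of 0] by (simp add: darboux_trans_def Lprod_empty)
  show "darboux_trans p J C \<gamma> p = (\<lambda>i k. C * ident i k + mmult (Umat p \<gamma>) (Lprod p \<gamma> 1 p) i k)"
    using darboux_trans_eq[OF assms, of p] by (simp add: Lprod_empty)
qed (use Lprod_banded Lprod_diag Umat_banded Umat_superdiag in auto)

lemma darboux_dual_seq_Suc:
  assumes "darboux_factorization p J C \<gamma>" "j < p"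
  shows "dual_seq (hess_poly (darboux_trans p J C \<gamma> (j+1))) n =
    (\<lambda>q. dual_seq (hess_poly (darboux_trans p J C \<gamma> j)) n q
         + \<gamma> (n*(p+1)+j+2) * dual_seq (hess_poly (darboux_trans p J C \<gamma> j)) (n+1) q)"
proof -
  interpret darboux_step C "Lmat p \<gamma> (j+1)" "Gmat p \<gamma> j"
      "darboux_trans p J C \<gamma> j" "darboux_trans p J C \<gamma> (j+1)"
    by (rule darboux_step_Lmat_Gmat[OF assms])
  show ?thesis
    using dual_seq_B[OF Lmat_banded(2), of n] by (simp add: Lmat_def)
qed

lemma darboux_shift_dual_seq:
  assumes "darboux_factorization p J C \<gamma>" "j < p"
  shows "shift_fun C (dual_seq (hess_poly (darboux_trans p J C \<gamma> j)) n) =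
    (\<lambda>q. (if n = 0 then 0 else dual_seq (hess_poly (darboux_trans p J C \<gamma> (j+1))) (n-1) q)
         + (\<Sum>s<p. Gmat p \<gamma> j (n+s) n * dual_seq (hess_poly (darboux_trans p J C \<gamma> (j+1))) (n+s) q))"
proof -
  interpret darboux_step C "Lmat p \<gamma> (j+1)" "Gmat p \<gamma> j"
      "darboux_trans p J C \<gamma> j" "darboux_trans p J C \<gamma> (j+1)"
    by (rule darboux_step_Lmat_Gmat[OF assms])
  have "Suc (p - 1) = p"
    using assms(2) by simp
  moreover have "Gmat p \<gamma> j (n-1) n = 1" if "n \<noteq> 0"
    using Gmat_superdiag[of p \<gamma> j "n-1"] that by simp
  ultimately show ?thesis
    unfolding shift_dual_seq_A[OF Gmat_lower_banded[OF assms(2)]] sum_atLeastAtMost_pred_split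
    by (cases "n = 0") simp_all
qed

lemma darboux_Umat_diag:
  assumes "darboux_factorization p J C \<gamma>" "poly (hess_poly J n) C \<noteq> 0"
  shows "\<gamma> (n*(p+1)+1) = - poly (hess_poly J (n+1)) C / poly (hess_poly J n) C"
proof -
  interpret darboux_step C "Lprod p \<gamma> 1 p" "Umat p \<gamma>" J "darboux_trans p J C \<gamma> p"
    by (rule darboux_step_Lprod_Umat[OF assms(1)])
  have "(\<Sum>m\<le>n. smult (Umat p \<gamma> n m) (hess_poly J m)) =
        (\<Sum>m\<le>n. if m = n then smult (\<gamma> (n*(p+1)+1)) (hess_poly J n) else 0)"
    by (rule sum.cong) (auto simp: Umat_def)
  then have "mat_vec 1 (Umat p \<gamma>) (hess_poly J) n =
        smult (\<gamma> (n*(p+1)+1)) (hess_poly J n) + hess_poly J (n+1)"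
    using mat_vec_unit_superdiag[of "Umat p \<gamma>" n, OF Umat_superdiag] by simp
  then have "\<gamma> (n*(p+1)+1) * poly (hess_poly J n) C + poly (hess_poly J (n+1)) C = 0"
    using arg_cong[OF hess_poly_transfer(2)[of n], of "\<lambda>q. poly q C"] by simp
  then show ?thesis
    using assms(2) by (simp add: field_simps eq_neg_iff_add_eq_0)
qed

lemma darboux_shift_dual_seq_J:
  assumes "darboux_factorization p J C \<gamma>" "poly (hess_poly J n) C \<noteq> 0"
  shows "shift_fun C (dual_seq (hess_poly J) n) =
    (\<lambda>q. (if n = 0 then 0 else dual_seq (hess_poly (darboux_trans p J C \<gamma> p)) (n-1) q)
         - poly (hess_poly J (n+1)) C / poly (hess_poly J n) C
           * dual_seq (hess_poly (darboux_trans p J C \<gamma> p)) n q)"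
proof -
  interpret darboux_step C "Lprod p \<gamma> 1 p" "Umat p \<gamma>" J "darboux_trans p J C \<gamma> p"
    by (rule darboux_step_Lprod_Umat[OF assms(1)])
  have "Umat p \<gamma> n n = - poly (hess_poly J (n+1)) C / poly (hess_poly J n) C"
    using darboux_Umat_diag[OF assms] by (simp add: Umat_def)
  moreover have "Umat p \<gamma> (n-1) n = 1" if "n \<noteq> 0"
    using Umat_superdiag[of p \<gamma> "n-1"] that by simp
  ultimately show ?thesis
    unfolding shift_dual_seq_A[OF Umat_banded(2)] sum_atLeastAtMost_pred_split
    by (cases "n = 0") simp_all
qed

theorem lemma3:
  fixes p :: nat and J :: imat and C :: complex and \<gamma> :: "nat \<Rightarrow> complex"
  assumes p1: "p \<ge> 1"
    and superdiag: "\<forall>n. J n (n+1) = 1"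
    and band: "\<forall>n m. (m > n + 1 \<or> m + p < n) \<longrightarrow> J n m = 0"
    and lowdiag: "\<forall>n. J (n+p) n \<noteq> 0"
    and PC: "\<forall>n\<ge>1. poly (hess_poly J n) C \<noteq> 0"
    and fact: "darboux_factorization p J C \<gamma>"
  defines "Ld \<equiv> \<lambda>j. dual_seq (hess_poly (darboux_trans p J C \<gamma> j))"
  shows "(\<forall>j<p. \<forall>n.
            Ld (j+1) n = (\<lambda>q. Ld j n q + \<gamma> (n*(p+1)+j+2) * Ld j (n+1) q) \<and>
            shift_fun C (Ld j n) =
              (\<lambda>q. (if n = 0 then 0 else Ld (j+1) (n-1) q)
                   + (\<Sum>s<p. Gmat p \<gamma> j (n+s) n * Ld (j+1) (n+s) q)))
       \<and> (\<forall>n. shift_fun C (Ld 0 n) =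
              (\<lambda>q. (if n = 0 then 0 else Ld p (n-1) q)
                   - poly (hess_poly J (n+1)) C / poly (hess_poly J n) C * Ld p n q))"
proof -
  \<comment> \<open>Only the factorization and \<open>P_n(C) \<noteq> 0\<close> are used.\<close>
  have "poly (hess_poly J n) C \<noteq> 0" for n
    using PC by (cases n) (auto simp: hess_poly_0)
  moreover have "darboux_trans p J C \<gamma> 0 = J"
    by (simp add: darboux_trans_def)
  ultimately show ?thesis
    unfolding Ld_def
    using darboux_dual_seq_Suc[OF fact] darboux_shift_dual_seq[OF fact]
      darboux_shift_dual_seq_J[OF fact]
    by auto
qed

end
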